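(* Let $\lambda_1\geq\lambda_{\max}(\mathbf{W})$ and $0<\lambda_2\leq\lambda_{\min}^+(\mathbf{W})$. Set $\eta=\frac{1}{4\tau L}$, $\theta=\frac{1}{\eta\lambda_1}$, $\alpha=\mu$, $\tau=\min\left\{1,\frac12\sqrt{\frac{\mu}{L}\frac{\lambda_1}{\lambda_2}}\right\}$. Define \[ \Psi^k = \left\|\begin{bmatrix}x^k-x^\star\\ y^k-y^\star\end{bmatrix}\right\|_{\mathbf{Q}}^2 + \frac{2(1-\tau)}{\tau}\mathrm{D}_F(x_f^k,x^\star). \] Then for every $k\geq0$, \[ \Psi^{k+1}\leq\left(1+\frac14\min\left\{\sqrt{\frac{\mu}{L}\frac{\lambda_2}{\lambda_1}},\frac{\lambda_2}{\lambda_1}\right\}\right)^{-1}\Psi^k . \]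
   Context: Let $\mathsf{X}=\mathbb{R}^d$, $\mathsf{Y}=\mathbb{R}^p$, $F:\mathsf{X}\to\mathbb{R}$ be $L$-smooth and $\mu$-strongly convex ($0<\mu\le L$), $\mathbf{K}$ a nonzero $p\times d$ matrix, $b\in\mathrm{range}(\mathbf{K})$, $\mathbf{W}=\mathbf{K}^T\mathbf{K}$ with largest eigenvalue $\lambda_{\max}(\mathbf{W})$ and smallest positive eigenvalue $\lambda_{\min}^+(\mathbf{W})$. $\mathrm{D}_F(x,x')=F(x)-F(x')-\langle\nabla F(x'),x-x'\rangle$. $x^\star=\arg\min_{\mathbf{K}x=b}F(x)$ and $y^\star$ is the unique vector in $\mathrm{range}(\mathbf{K})$ with $\nabla F(x^\star)+\mathbf{K}^Ty^\star=0$. The iterates come from the algorithm with $x^0\in\mathsf{X}$, $y^0=0$, $x_f^0=x^0$, iterating for $k=0,1,\ldots$: $x_g^k = \tau x^k + (1-\tau)x_f^k$; $x^{k+\frac12} = (1+\eta\alpha)^{-1}\big(x^k - \eta(\nabla F(x_g^k) - \alpha x_g^k + \mathbf{K}^T y^k)\big)$; $y^{k+1} = y^k + \theta(\mathbf{K} x^{k+\frac12} - b)$; $x^{k+1} = (1+\eta\alpha)^{-1}\big(x^k - \eta(\nabla F(x_g^k) - \alpha x_g^k + \mathbf{K}^T y^{k+1})\big)$; $x_f^{k+1} = x_g^k + \frac{2\tau}{2-\tau}(x^{k+1}-x^k)$. $\mathbf{Q} = \begin{bmatrix}\frac{1}{\eta}\mathbf{I}_\mathsf{X} & 0\\ 0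 & \frac{1}{\theta}\mathbf{I}_\mathsf{Y} - \frac{\eta}{1+\eta\alpha}\mathbf{K}\mathbf{K}^T\end{bmatrix}$ and $\|z\|_{\mathbf{Q}}^2=\langle\mathbf{Q}z,z\rangle$. *)

theory Defs
  imports "HOL-Analysis.Analysis"
begin

text \<open>Euclidean spaces X = R^d and Y = R^p are rendered as real^'d and real^'p;
  the p x d matrix K is real^'d^'p. The gradient of F is the function g.\<close>

definition has_gradient_everywhere :: "(real^'d \<Rightarrow> real) \<Rightarrow> (real^'d \<Rightarrow> real^'d) \<Rightarrow> bool" where
  "has_gradient_everywhere F g \<longleftrightarrow> (\<forall>x. (F has_derivative (\<lambda>h. g x \<bullet> h)) (at x))"

definition L_smooth :: "real \<Rightarrow> (real^'d \<Rightarrow> real) \<Rightarrow> (real^'d \<Rightarrow> real^'d) \<Rightarrow> bool" where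
  "L_smooth L F g \<longleftrightarrow> has_gradient_everywhere F g \<and> (\<forall>x y. norm (g x - g y) \<le> L * norm (x - y))"

definition strongly_convex :: "real \<Rightarrow> (real^'d \<Rightarrow> real) \<Rightarrow> bool" where
  "strongly_convex \<mu> F \<longleftrightarrow> convex_on UNIV (\<lambda>x. F x - (\<mu> / 2) * (norm x)\<^sup>2)"

definition bregman :: "(real^'d \<Rightarrow> real) \<Rightarrow> (real^'d \<Rightarrow> real^'d) \<Rightarrow> real^'d \<Rightarrow> real^'d \<Rightarrow> real" where
  "bregman F g x x' = F x - F x' - g x' \<bullet> (x - x')"

definition is_eigenvalue :: "real^'n^'n \<Rightarrow> real \<Rightarrow> bool" where
  "is_eigenvalue W c \<longleftrightarrow> (\<exists>v. v \<noteq> 0 \<and> W *v v = c *\<^sub>R v)"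

definition lambda_max :: "real^'n^'n \<Rightarrow> real" where
  "lambda_max W = Max {c. is_eigenvalue W c}"

definition lambda_min_pos :: "real^'n^'n \<Rightarrow> real" where
  "lambda_min_pos W = Min {c. is_eigenvalue W c \<and> c > 0}"

definition Qnorm2 :: "real^'d^'p \<Rightarrow> real \<Rightarrow> real \<Rightarrow> real \<Rightarrow> real^'d \<Rightarrow> real^'p \<Rightarrow> real" where
  "Qnorm2 K \<eta> \<theta> \<alpha> u v =
     (1/\<eta>) * (u \<bullet> u) + (1/\<theta>) * (v \<bullet> v) - (\<eta> / (1 + \<eta> * \<alpha>)) * (v \<bullet> ((K ** transpose K) *v v))"

fun alg :: "(real^'d \<Rightarrow> real^'d) \<Rightarrow> real^'d^'p \<Rightarrow> real^'p \<Rightarrow> real \<Rightarrow> real \<Rightarrow> real \<Rightarrow> real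
            \<Rightarrow> real^'d \<Rightarrow> nat \<Rightarrow> (real^'d) \<times> (real^'p) \<times> (real^'d)" where
  "alg g K b \<eta> \<theta> \<alpha> \<tau> x0 0 = (x0, 0, x0)"
| "alg g K b \<eta> \<theta> \<alpha> \<tau> x0 (Suc k) =
    (let (x, y, xf) = alg g K b \<eta> \<theta> \<alpha> \<tau> x0 k;
         xg = \<tau> *\<^sub>R x + (1 - \<tau>) *\<^sub>R xf;
         xh = (1 / (1 + \<eta> * \<alpha>)) *\<^sub>R (x - \<eta> *\<^sub>R (g xg - \<alpha> *\<^sub>R xg + transpose K *v y));
         y' = y + \<theta> *\<^sub>R (K *v xh - b);
         x' = (1 / (1 + \<eta> * \<alpha>)) *\<^sub>R (x - \<eta> *\<^sub>R (g xg - \<alpha> *\<^sub>R xg + transpose K *v y'));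
         xf' = xg + (2 * \<tau> / (2 - \<tau>)) *\<^sub>R (x' - x)
     in (x', y', xf'))"

end

theory Submission
  imports Defs
begin

(* With u = x^(k+1) - x* and v = y^(k+1) - y*, the
   primal update, the dual update (which says (1/theta - eta/(1 + eta alpha) K K^T)(y^(k+1) - y^k) = K u)
   and the momentum coupling of x_g, x_f turn Psi^(k+1) - Psi^k into an exact combination of
   Bregman divergences of F. Strong convexity, co-coercivity and L-smoothness then give
   Psi^(k+1) + D <= Psi^k for an explicit dissipation D >= 0. Conversely rho Psi^(k+1) <= D for the
   stated rate rho: the primal parts of Psi^(k+1) are dominated directly, and the dual part because
   y^(k+1) - y* stays in range K, where ||K^T v||^2 >= lam2 ||v||^2, while K^T v can be read off
   the primal update. Hence (1 + rho) Psi^(k+1) <= Psi^k.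

   The spectral inequalities come from Rayleigh quotients: a maximiser of ||K^T w||^2 on the unit
   sphere, or a minimiser on the unit sphere of range K, is an eigenvector of K K^T, and its image
   under K^T is an eigenvector of K^T K for the same eigenvalue. *)

section \<open>Spectral bounds for \<open>K\<^sup>T K\<close>\<close>

lemma inner_matrix_vector_mult_transpose:
  fixes A :: "real^'n^'m"
  shows "(A *v x) \<bullet> y = x \<bullet> (transpose A *v y)"
  by (metis dot_lmul_matrix vector_transpose_matrix)

lemma inner_mult_transpose:
  fixes K :: "real^'d^'p"
  shows "v \<bullet> (K *v (transpose K *v w)) = (transpose K *v v) \<bullet> (transpose K *v w)"
  by (metis inner_commute inner_matrix_vector_mult_transpose)

lemma transpose_mult_operator:
  fixes K :: "real^'d^'p"
  shows "linear (\<lambda>v. K *v (transpose K *v v))"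
    and "(K *v (transpose K *v v)) \<bullet> w = v \<bullet> (K *v (transpose K *v w))"
    and "v \<bullet> (K *v (transpose K *v v)) = (norm (transpose K *v v))\<^sup>2"
proof -
  show "linear (\<lambda>v. K *v (transpose K *v v))"
    by (intro linear_compose[OF matrix_vector_mul_linear matrix_vector_mul_linear, unfolded o_def])
  show "(K *v (transpose K *v v)) \<bullet> w = v \<bullet> (K *v (transpose K *v w))"
    by (metis inner_commute inner_mult_transpose)
  show "v \<bullet> (K *v (transpose K *v v)) = (norm (transpose K *v v))\<^sup>2"
    unfolding inner_mult_transpose power2_norm_eq_inner ..
qed

lemma exists_matrix_vector_mult_nonzero:
  fixes K :: "real^'d^'p"
  assumes "K \<noteq> 0"
  obtains w where "K *v w \<noteq> 0"
  using assms matrix_eq[of K 0] by auto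

lemma exists_transpose_mult_nonzero:
  fixes K :: "real^'d^'p"
  assumes "K \<noteq> 0"
  obtains w where "transpose K *v w \<noteq> 0"
proof -
  obtain x where "K *v x \<noteq> 0" using assms exists_matrix_vector_mult_nonzero by blast
  moreover have "(K *v x) \<bullet> (K *v x) = x \<bullet> (transpose K *v (K *v x))"
    by (rule inner_matrix_vector_mult_transpose)
  ultimately show ?thesis using that by fastforce
qed

lemma is_eigenvalue_transpose_mult:
  fixes K :: "real^'d^'p"
  assumes "K *v (transpose K *v u) = m *\<^sub>R u" "transpose K *v u \<noteq> 0"
  shows "is_eigenvalue (transpose K ** K) m"
proof -
  have "(transpose K ** K) *v (transpose K *v u) = m *\<^sub>R (transpose K *v u)"
    by (simp only: matrix_vector_mul_assoc[symmetric] assms(1) matrix_vector_mult_scaleR)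
  then show ?thesis unfolding is_eigenvalue_def using assms(2) by blast
qed

lemma symmetric_transpose_mult:
  fixes K :: "real^'d^'p"
  shows "transpose (transpose K ** K) = transpose K ** K"
  by (simp add: matrix_transpose_mul)

lemma finite_eigenvalues_symmetric:
  fixes W :: "real^'n^'n"
  assumes "transpose W = W"
  shows "finite {c. is_eigenvalue W c}"
proof -
  define E where "E = {c. is_eigenvalue W c}"
  have sym: "(W *v a) \<bullet> b = a \<bullet> (W *v b)" for a b
    using inner_matrix_vector_mult_transpose[of W a b] assms by simp
  define v where "v c = (SOME v. v \<noteq> 0 \<and> W *v v = c *\<^sub>R v)" for c
  have v: "v c \<noteq> 0 \<and> W *v v c = c *\<^sub>R v c" if "c \<in> E" for c
    using someI_ex[of "\<lambda>v. v \<noteq> 0 \<and> W *v v = c *\<^sub>R v"] that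
    unfolding E_def is_eigenvalue_def v_def by simp
  have orth: "v c1 \<bullet> v c2 = 0" if "c1 \<in> E" "c2 \<in> E" "c1 \<noteq> c2" for c1 c2
  proof -
    have "c1 * (v c1 \<bullet> v c2) = (W *v v c1) \<bullet> v c2" using v[OF that(1)] by simp
    also have "\<dots> = v c1 \<bullet> (W *v v c2)" by (rule sym)
    also have "\<dots> = c2 * (v c1 \<bullet> v c2)" using v[OF that(2)] by simp
    finally show ?thesis using that(3) by simp
  qed
  have "inj_on v E"
    by (rule inj_onI) (metis orth v inner_eq_zero_iff)
  moreover have "independent (v ` E)"
    by (rule pairwise_orthogonal_independent) (use orth v in \<open>auto simp: pairwise_def orthogonal_def\<close>)
  then have "finite (v ` E)" by (rule independent_imp_finite)
  ultimately show ?thesis unfolding E_def using finite_imageD by blast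
qed

lemma quadratic_nonneg_imp_linear_coeff_zero:
  fixes a b :: real
  assumes "\<And>t. 0 \<le> t\<^sup>2 * b - 2 * t * a"
  shows "a = 0"
proof (rule ccontr)
  assume "a \<noteq> 0"
  define c where "c = \<bar>b\<bar> + 1"
  define t where "t = a / c"
  have "0 < c" "b < 2 * c" unfolding c_def by auto
  then have "a = t * c" unfolding t_def by simp
  then have "t\<^sup>2 * b - 2 * t * a = t\<^sup>2 * (b - 2 * c)"
    by (simp add: power2_eq_square algebra_simps)
  also have "\<dots> < 0"
    using \<open>a \<noteq> 0\<close> \<open>a = t * c\<close> \<open>b < 2 * c\<close> by (intro mult_pos_neg) auto
  finally show False using assms[of t] by simp
qed

lemma symmetric_form_min_eigenvector:
  fixes A :: "'a::real_inner \<Rightarrow> 'a"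
  assumes "linear A" and sym: "\<And>v w. A v \<bullet> w = v \<bullet> A w"
    and "subspace S" "u \<in> S" "A u \<in> S"
    and ge: "\<And>v. v \<in> S \<Longrightarrow> m * (v \<bullet> v) \<le> v \<bullet> A v"
    and eq: "u \<bullet> A u = m * (u \<bullet> u)"
  shows "A u = m *\<^sub>R u"
proof -
  define z where "z = A u - m *\<^sub>R u"
  have "z \<in> S" unfolding z_def using assms(3-5) by (simp add: subspace_diff subspace_scale)
  have "z \<bullet> z = 0"
  proof (rule quadratic_nonneg_imp_linear_coeff_zero)
    fix t :: real
    have "u - t *\<^sub>R z \<in> S" using \<open>z \<in> S\<close> assms(3,4) by (simp add: subspace_diff subspace_scale)
    then have "0 \<le> (u - t *\<^sub>R z) \<bullet> A (u - t *\<^sub>R z) - m * ((u - t *\<^sub>R z) \<bullet> (u - t *\<^sub>R z))"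
      using ge by fastforce
    also have "\<dots> = (u \<bullet> A u - m * (u \<bullet> u)) - 2 * t * (z \<bullet> A u - m * (z \<bullet> u))
        + t\<^sup>2 * (z \<bullet> A z - m * (z \<bullet> z))"
      using sym[of z u] \<open>linear A\<close>
      by (simp add: linear_diff linear_scale inner_commute algebra_simps power2_eq_square)
    also have "z \<bullet> A u - m * (z \<bullet> u) = z \<bullet> z"
      unfolding z_def by (simp add: inner_commute algebra_simps)
    finally show "0 \<le> t\<^sup>2 * (z \<bullet> A z - m * (z \<bullet> z)) - 2 * t * (z \<bullet> z)"
      using eq by simp
  qed
  then show ?thesis unfolding z_def by simp
qed

lemma symmetric_form_max_eigenvector:
  fixes A :: "'a::real_inner \<Rightarrow> 'a"
  assumes "linear A" and sym: "\<And>v w. A v \<bullet> w = v \<bullet> A w"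
    and "subspace S" "u \<in> S" "A u \<in> S"
    and le: "\<And>v. v \<in> S \<Longrightarrow> v \<bullet> A v \<le> m * (v \<bullet> v)"
    and eq: "u \<bullet> A u = m * (u \<bullet> u)"
  shows "A u = m *\<^sub>R u"
proof -
  have "- A u = (- m) *\<^sub>R u"
  proof (rule symmetric_form_min_eigenvector[where A = "\<lambda>v. - A v"])
    show "linear (\<lambda>v. - A v)" using \<open>linear A\<close> by (rule linear_compose_neg)
    show "- A v \<bullet> w = v \<bullet> - A w" for v w using sym by simp
    show "- A u \<in> S" using \<open>subspace S\<close> \<open>A u \<in> S\<close> by (rule subspace_neg)
    show "- m * (v \<bullet> v) \<le> v \<bullet> - A v" if "v \<in> S" for v using le[OF that] by simp
  qed (use assms eq in auto)
  then show ?thesis by simp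
qed

lemma power2_norm_matrix_vector_mult_normalize:
  fixes B :: "real^'n^'m"
  shows "(norm (B *v ((1 / norm v) *\<^sub>R v)))\<^sup>2 = (norm (B *v v))\<^sup>2 / (norm v)\<^sup>2"
  by (simp add: matrix_vector_mult_scaleR power_divide)

lemma norm_matrix_vector_mult_attains_max:
  fixes B :: "real^'n^'m"
  obtains w0 where "norm w0 = 1" "\<And>w. (norm (B *v w))\<^sup>2 \<le> (norm (B *v w0))\<^sup>2 * (norm w)\<^sup>2"
proof -
  define f where "f w = (norm (B *v w))\<^sup>2" for w
  have cont: "continuous_on (sphere 0 1) f"
    unfolding f_def by (intro continuous_intros linear_continuous_on matrix_vector_mul_bounded_linear)
  obtain w0 where w0: "w0 \<in> sphere 0 1" and max: "\<And>w. w \<in> sphere 0 1 \<Longrightarrow> f w \<le> f w0"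
    using continuous_attains_sup[OF compact_sphere _ cont] by force
  have "f w \<le> f w0 * (norm w)\<^sup>2" for w
  proof (cases "w = 0")
    case False
    then have "f w / (norm w)\<^sup>2 \<le> f w0"
      using max[of "(1 / norm w) *\<^sub>R w"] unfolding f_def power2_norm_matrix_vector_mult_normalize by simp
    then show ?thesis using False by (simp add: divide_le_eq)
  qed (simp add: f_def)
  then show ?thesis using that w0 unfolding f_def by simp
qed

lemma norm_matrix_vector_mult_attains_min_on_subspace:
  fixes B :: "real^'n^'m"
  assumes "subspace S" "v1 \<in> S" "v1 \<noteq> 0"
  obtains u0 where "u0 \<in> S" "norm u0 = 1"
    "\<And>v. v \<in> S \<Longrightarrow> (norm (B *v u0))\<^sup>2 * (norm v)\<^sup>2 \<le> (norm (B *v v))\<^sup>2"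
proof -
  define f where "f w = (norm (B *v w))\<^sup>2" for w
  have normalize: "(1 / norm v) *\<^sub>R v \<in> sphere 0 1 \<inter> S" if "v \<in> S" "v \<noteq> 0" for v
    using that \<open>subspace S\<close> by (simp add: subspace_scale)
  have "compact (sphere 0 1 \<inter> S)"
    using closed_subspace[OF \<open>subspace S\<close>] by (intro compact_Int_closed compact_sphere)
  moreover have "sphere 0 1 \<inter> S \<noteq> {}" using normalize[OF assms(2,3)] by blast
  moreover have "continuous_on (sphere 0 1 \<inter> S) f"
    unfolding f_def by (intro continuous_intros linear_continuous_on matrix_vector_mul_bounded_linear)
  ultimately obtain u0 where u0: "u0 \<in> sphere 0 1 \<inter> S"
    and min: "\<And>v. v \<in> sphere 0 1 \<inter> S \<Longrightarrow> f u0 \<le> f v"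
    using continuous_attains_inf by metis
  have "f u0 * (norm v)\<^sup>2 \<le> f v" if "v \<in> S" for v
  proof (cases "v = 0")
    case False
    then have "f u0 \<le> f v / (norm v)\<^sup>2"
      using min[OF normalize[OF that False]] unfolding f_def power2_norm_matrix_vector_mult_normalize by simp
    then show ?thesis using False by (simp add: le_divide_eq)
  qed (simp add: f_def)
  then show ?thesis using u0 by (intro that) (auto simp: f_def)
qed

lemma norm_transpose_mult_le_eigenvalue:
  fixes K :: "real^'d^'p"
  assumes "K \<noteq> 0"
  obtains M where "0 < M" "is_eigenvalue (transpose K ** K) M"
    "\<And>w. (norm (transpose K *v w))\<^sup>2 \<le> M * (norm w)\<^sup>2"
proof -
  obtain w0 where "norm w0 = 1"
    and bound: "\<And>w. (norm (transpose K *v w))\<^sup>2 \<le> (norm (transpose K *v w0))\<^sup>2 * (norm w)\<^sup>2"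
    using norm_matrix_vector_mult_attains_max by blast
  define M where "M = (norm (transpose K *v w0))\<^sup>2"
  have "K *v (transpose K *v w0) = M *\<^sub>R w0"
  proof (rule symmetric_form_max_eigenvector[OF transpose_mult_operator(1,2) subspace_UNIV])
    show "v \<bullet> (K *v (transpose K *v v)) \<le> M * (v \<bullet> v)" for v
      using bound[of v] unfolding M_def transpose_mult_operator(3) by (simp add: dot_square_norm)
    show "w0 \<bullet> (K *v (transpose K *v w0)) = M * (w0 \<bullet> w0)"
      using \<open>norm w0 = 1\<close> unfolding M_def transpose_mult_operator(3) by (simp add: dot_square_norm)
  qed auto
  moreover obtain w where "transpose K *v w \<noteq> 0" using exists_transpose_mult_nonzero[OF assms] by blast
  then have "0 < (norm (transpose K *v w))\<^sup>2" by simp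
  then have "0 < M * (norm w)\<^sup>2" using bound[of w, folded M_def] by linarith
  then have "0 < M" by (simp add: zero_less_mult_iff)
  moreover from this have "transpose K *v w0 \<noteq> 0" unfolding M_def by auto
  ultimately show ?thesis using that bound is_eigenvalue_transpose_mult unfolding M_def by blast
qed

lemma eigenvalue_le_norm_transpose_mult:
  fixes K :: "real^'d^'p"
  assumes "K \<noteq> 0"
  obtains m where "0 < m" "is_eigenvalue (transpose K ** K) m"
    "\<And>w. m * (norm (K *v w))\<^sup>2 \<le> (norm (transpose K *v (K *v w)))\<^sup>2"
proof -
  have "subspace (range (\<lambda>x. K *v x))"
    using linear_subspace_image[OF matrix_vector_mul_linear[of K] subspace_UNIV] by simp
  moreover obtain x where "K *v x \<noteq> 0" using exists_matrix_vector_mult_nonzero[OF assms] by blast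
  ultimately obtain u0 where "u0 \<in> range (\<lambda>x. K *v x)" "norm u0 = 1"
    and bound: "\<And>v. v \<in> range (\<lambda>x. K *v x) \<Longrightarrow>
      (norm (transpose K *v u0))\<^sup>2 * (norm v)\<^sup>2 \<le> (norm (transpose K *v v))\<^sup>2"
    using norm_matrix_vector_mult_attains_min_on_subspace[of _ "K *v x"] by blast
  define m where "m = (norm (transpose K *v u0))\<^sup>2"
  have eig: "K *v (transpose K *v u0) = m *\<^sub>R u0"
  proof (rule symmetric_form_min_eigenvector[OF transpose_mult_operator(1,2) \<open>subspace _\<close> \<open>u0 \<in> _\<close>])
    show "m * (v \<bullet> v) \<le> v \<bullet> (K *v (transpose K *v v))" if "v \<in> range (\<lambda>x. K *v x)" for v
      using bound[OF that] unfolding m_def transpose_mult_operator(3) by (simp add: dot_square_norm mult.commute)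
    show "u0 \<bullet> (K *v (transpose K *v u0)) = m * (u0 \<bullet> u0)"
      using \<open>norm u0 = 1\<close> unfolding m_def transpose_mult_operator(3) by (simp add: dot_square_norm)
  qed auto
  have nonzero: "transpose K *v u0 \<noteq> 0"
  proof
    assume "transpose K *v u0 = 0"
    moreover obtain w0 where "u0 = K *v w0" using \<open>u0 \<in> range _\<close> by blast
    ultimately have "u0 \<bullet> u0 = 0" using inner_matrix_vector_mult_transpose[of K w0 u0] by simp
    then show False using \<open>norm u0 = 1\<close> by simp
  qed
  then have "0 < m" unfolding m_def by simp
  moreover have "is_eigenvalue (transpose K ** K) m"
    using eig nonzero by (rule is_eigenvalue_transpose_mult)
  moreover have "m * (norm (K *v w))\<^sup>2 \<le> (norm (transpose K *v (K *v w)))\<^sup>2" for w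
    using bound[of "K *v w"] unfolding m_def by simp
  ultimately show ?thesis using that by blast
qed

lemma lambda_max_bound:
  fixes K :: "real^'d^'p"
  assumes "K \<noteq> 0"
  shows "0 < lambda_max (transpose K ** K)"
    and "(norm (transpose K *v w))\<^sup>2 \<le> lambda_max (transpose K ** K) * (norm w)\<^sup>2"
proof -
  obtain M where M: "0 < M" "is_eigenvalue (transpose K ** K) M"
    "\<And>w. (norm (transpose K *v w))\<^sup>2 \<le> M * (norm w)\<^sup>2"
    using norm_transpose_mult_le_eigenvalue[OF assms] by blast
  have "M \<le> lambda_max (transpose K ** K)"
    unfolding lambda_max_def
    using finite_eigenvalues_symmetric[OF symmetric_transpose_mult] M(2) by (intro Max_ge) auto
  then show "0 < lambda_max (transpose K ** K)" using M(1) by simp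
  show "(norm (transpose K *v w))\<^sup>2 \<le> lambda_max (transpose K ** K) * (norm w)\<^sup>2"
    using M(3)[of w] \<open>M \<le> _\<close> by (meson mult_right_mono order_trans zero_le_power2)
qed

lemma lambda_min_pos_bound:
  fixes K :: "real^'d^'p"
  assumes "K \<noteq> 0"
  shows "lambda_min_pos (transpose K ** K) \<le> lambda_max (transpose K ** K)"
    and "lambda_min_pos (transpose K ** K) * (norm (K *v w))\<^sup>2 \<le> (norm (transpose K *v (K *v w)))\<^sup>2"
proof -
  have fin: "finite {c. is_eigenvalue (transpose K ** K) c}"
    by (rule finite_eigenvalues_symmetric[OF symmetric_transpose_mult])
  obtain m where m: "0 < m" "is_eigenvalue (transpose K ** K) m"
    "\<And>w. m * (norm (K *v w))\<^sup>2 \<le> (norm (transpose K *v (K *v w)))\<^sup>2"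
    using eigenvalue_le_norm_transpose_mult[OF assms] by blast
  have "{c. is_eigenvalue (transpose K ** K) c \<and> 0 < c} \<subseteq> {c. is_eigenvalue (transpose K ** K) c}"
    by blast
  then have fin_pos: "finite {c. is_eigenvalue (transpose K ** K) c \<and> 0 < c}"
    using fin by (rule finite_subset)
  have "lambda_min_pos (transpose K ** K) \<le> m"
    unfolding lambda_min_pos_def using fin_pos m(1,2) by (intro Min_le) auto
  moreover have "m \<le> lambda_max (transpose K ** K)"
    unfolding lambda_max_def using fin m(2) by (intro Max_ge) auto
  ultimately show "lambda_min_pos (transpose K ** K) \<le> lambda_max (transpose K ** K)" by simp
  show "lambda_min_pos (transpose K ** K) * (norm (K *v w))\<^sup>2 \<le> (norm (transpose K *v (K *v w)))\<^sup>2"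
    using m(3)[of w] \<open>lambda_min_pos _ \<le> m\<close> by (meson mult_right_mono order_trans zero_le_power2)
qed

section \<open>Bregman divergence of a smooth strongly convex function\<close>

lemma has_gradient_line_derivative:
  assumes "has_gradient_everywhere F g"
  shows "((\<lambda>t. F (y + t *\<^sub>R d)) has_real_derivative (g (y + t *\<^sub>R d) \<bullet> d)) (at t)"
proof -
  have "((\<lambda>t. y + t *\<^sub>R d) has_derivative (\<lambda>h. h *\<^sub>R d)) (at t)"
    by (auto intro!: derivative_eq_intros)
  moreover have "(F has_derivative (\<lambda>h. g (y + t *\<^sub>R d) \<bullet> h)) (at (y + t *\<^sub>R d))"
    using assms unfolding has_gradient_everywhere_def by blast
  ultimately have "((F \<circ> (\<lambda>t. y + t *\<^sub>R d)) has_derivative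
      ((\<lambda>h. g (y + t *\<^sub>R d) \<bullet> h) \<circ> (\<lambda>h. h *\<^sub>R d))) (at t)"
    by (rule diff_chain_at)
  moreover have "(\<lambda>h. g (y + t *\<^sub>R d) \<bullet> h) \<circ> (\<lambda>h. h *\<^sub>R d) = (*) (g (y + t *\<^sub>R d) \<bullet> d)"
    by (auto simp: fun_eq_iff)
  ultimately show ?thesis unfolding has_field_derivative_def o_def by simp
qed

lemma convex_on_line:
  assumes "convex_on UNIV f"
  shows "convex_on UNIV (\<lambda>t::real. f (y + t *\<^sub>R d))"
proof (rule convex_onI)
  fix s a b :: real
  assume "0 < s" "s < 1"
  have "y + ((1 - s) *\<^sub>R a + s *\<^sub>R b) *\<^sub>R d = (1 - s) *\<^sub>R (y + a *\<^sub>R d) + s *\<^sub>R (y + b *\<^sub>R d)"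
    by (simp add: algebra_simps)
  then show "f (y + ((1 - s) *\<^sub>R a + s *\<^sub>R b) *\<^sub>R d) \<le> (1 - s) * f (y + a *\<^sub>R d) + s * f (y + b *\<^sub>R d)"
    using convex_onD[OF assms, of s] \<open>0 < s\<close> \<open>s < 1\<close> by simp
qed simp

lemma strongly_convex_bregman_ge:
  assumes "has_gradient_everywhere F g" "strongly_convex \<mu> F"
  shows "\<mu> / 2 * (norm (x - y))\<^sup>2 \<le> bregman F g x y"
proof -
  define d where "d = x - y"
  define \<psi> where "\<psi> t = F (y + t *\<^sub>R d) - (\<mu> / 2) * (norm (y + t *\<^sub>R d))\<^sup>2" for t
  have "convex_on UNIV \<psi>"
    unfolding \<psi>_def using assms(2) unfolding strongly_convex_def by (rule convex_on_line)
  have \<psi>_eq: "\<psi> t = F (y + t *\<^sub>R d) - (\<mu> / 2) * (y \<bullet> y + 2 * t * (y \<bullet> d) + t\<^sup>2 * (d \<bullet> d))" for t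
    unfolding \<psi>_def power2_norm_eq_inner
    by (simp add: inner_commute algebra_simps power2_eq_square)
  have "(\<psi> has_real_derivative (g (y + 0 *\<^sub>R d) \<bullet> d - (\<mu> / 2) * (2 * (y \<bullet> d) + 2 * 0 * (d \<bullet> d)))) (at 0)"
    unfolding \<psi>_eq[abs_def]
    by (rule derivative_eq_intros has_gradient_line_derivative[OF assms(1)] | simp)+
  then have "(\<psi> has_real_derivative (g y \<bullet> d - \<mu> * (y \<bullet> d))) (at 0 within UNIV)" by simp
  from convex_on_imp_above_tangent[OF \<open>convex_on UNIV \<psi>\<close> _ _ _ this, of 1]
  have "(g y \<bullet> d - \<mu> * (y \<bullet> d)) * (1 - 0) \<le> \<psi> 1 - \<psi> 0" by simp
  then show ?thesis unfolding \<psi>_eq bregman_def d_def power2_norm_eq_inner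
    by (simp add: inner_commute algebra_simps)
qed

lemma bregman_nonneg:
  assumes "has_gradient_everywhere F g" "strongly_convex \<mu> F" "0 \<le> \<mu>"
  shows "0 \<le> bregman F g x y"
  using strongly_convex_bregman_ge[OF assms(1,2), of x y] assms(3)
  by (meson order_trans mult_nonneg_nonneg divide_nonneg_pos zero_le_power2 zero_less_numeral)

lemma L_smooth_bregman_le:
  assumes "L_smooth L F g"
  shows "bregman F g x y \<le> L / 2 * (norm (x - y))\<^sup>2"
proof -
  define d where "d = x - y"
  have grad: "has_gradient_everywhere F g" and lip: "\<And>a b. norm (g a - g b) \<le> L * norm (a - b)"
    using assms unfolding L_smooth_def by auto
  define q where "q t = L / 2 * t\<^sup>2 * (d \<bullet> d) + t * (g y \<bullet> d) - F (y + t *\<^sub>R d)" for t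
  have "q 0 \<le> q 1"
  proof (rule DERIV_nonneg_imp_nondecreasing[of 0 1])
    fix t :: real
    assume t: "0 \<le> t" "t \<le> 1"
    have "(q has_real_derivative (L / 2 * (2 * t) * (d \<bullet> d) + g y \<bullet> d - g (y + t *\<^sub>R d) \<bullet> d)) (at t)"
      unfolding q_def[abs_def]
      by (rule derivative_eq_intros has_gradient_line_derivative[OF grad] | simp)+
    moreover have "(g (y + t *\<^sub>R d) - g y) \<bullet> d \<le> L * t * (d \<bullet> d)"
    proof -
      have "(g (y + t *\<^sub>R d) - g y) \<bullet> d \<le> norm (g (y + t *\<^sub>R d) - g y) * norm d"
        by (rule norm_cauchy_schwarz)
      also have "\<dots> \<le> (L * norm (t *\<^sub>R d)) * norm d"
        using lip[of "y + t *\<^sub>R d" y] by (simp add: mult_right_mono)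
      also have "\<dots> = L * t * (d \<bullet> d)"
        using t by (simp add: power2_norm_eq_inner[symmetric] power2_eq_square)
      finally show ?thesis .
    qed
    ultimately show "\<exists>y. DERIV q t :> y \<and> 0 \<le> y"
      by (auto simp: inner_diff_left)
  qed simp
  then show ?thesis unfolding q_def bregman_def d_def power2_norm_eq_inner by simp
qed

lemma bregman_ge_norm_gradient_diff:
  assumes "L_smooth L F g" "strongly_convex \<mu> F" "0 \<le> \<mu>" "0 < L"
  shows "(norm (g x - g y))\<^sup>2 / (2 * L) \<le> bregman F g x y"
proof -
  have grad: "has_gradient_everywhere F g" using assms(1) unfolding L_smooth_def by auto
  define z where "z = x - (1 / L) *\<^sub>R (g x - g y)"
  have "norm (z - x) = norm (g x - g y) / L"
    unfolding z_def using assms(4) by simp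
  then have zx: "bregman F g z x \<le> (norm (g x - g y))\<^sup>2 / (2 * L)"
    using L_smooth_bregman_le[OF assms(1), of z x] assms(4) by (simp add: power_divide power2_eq_square)
  have "(norm (g x - g y))\<^sup>2 / (2 * L) = 0 - (norm (g x - g y))\<^sup>2 / (2 * L) + (norm (g x - g y))\<^sup>2 / L"
    by simp
  also have "\<dots> \<le> bregman F g z y - bregman F g z x - (g x - g y) \<bullet> (z - x)"
    using bregman_nonneg[OF grad assms(2,3), of z y] zx
    unfolding z_def by (simp add: power2_norm_eq_inner)
  also have "\<dots> = bregman F g x y"
    unfolding bregman_def by (simp add: algebra_simps)
  finally show ?thesis .
qed

section \<open>One step of the algorithm\<close>

lemma min_sqrt_ratio_bounds:
  fixes r q :: real
  assumes "0 < r" "0 < q"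
  shows "min (sqrt (r * q)) q / 4 \<le> min 1 (sqrt (r / q) / 2) * q / 2"
    and "min (sqrt (r * q)) q / 4 * min 1 (sqrt (r / q) / 2) \<le> r / 8"
proof -
  have "sqrt (r / q) * q = sqrt (r / q) * sqrt (q\<^sup>2)" using assms by simp
  also have "\<dots> = sqrt (r / q * q\<^sup>2)" by (simp only: real_sqrt_mult)
  also have "r / q * q\<^sup>2 = r * q" using assms by (simp add: power2_eq_square)
  finally have s1: "sqrt (r / q) * q = sqrt (r * q)" .
  have "sqrt (r * q) * sqrt (r / q) = sqrt (r\<^sup>2)"
    using assms by (simp add: real_sqrt_mult[symmetric] power2_eq_square)
  then have s2: "sqrt (r * q) * sqrt (r / q) = r"
    using assms by simp
  show "min (sqrt (r * q)) q / 4 \<le> min 1 (sqrt (r / q) / 2) * q / 2"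
    using s1 assms by (cases "1 \<le> sqrt (r / q) / 2") (auto simp: min_def)
  have "min (sqrt (r * q)) q / 4 * min 1 (sqrt (r / q) / 2) \<le> sqrt (r * q) / 4 * (sqrt (r / q) / 2)"
    using assms by (intro mult_mono) auto
  also have "\<dots> = r / 8" using s2 by simp
  finally show "min (sqrt (r * q)) q / 4 * min 1 (sqrt (r / q) / 2) \<le> r / 8" .
qed

lemma Qnorm2_eq:
  "Qnorm2 K \<eta> \<theta> \<alpha> u v
     = (1 / \<eta>) * (norm u)\<^sup>2 + (1 / \<theta>) * (norm v)\<^sup>2 - \<eta> / (1 + \<eta> * \<alpha>) * (norm (transpose K *v v))\<^sup>2"
  unfolding Qnorm2_def power2_norm_eq_inner matrix_vector_mul_assoc[symmetric] inner_mult_transpose ..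

lemma norm_add3_power2_le:
  fixes a b c :: "'a::real_normed_vector"
  shows "(norm (a + b + c))\<^sup>2 \<le> 2 * (norm a)\<^sup>2 + 4 * (norm b)\<^sup>2 + 4 * (norm c)\<^sup>2"
proof -
  have "norm (a + b + c) \<le> norm a + norm b + norm c"
    by (meson norm_triangle_le order_refl add_mono)
  then have "(norm (a + b + c))\<^sup>2 \<le> (norm a + norm b + norm c)\<^sup>2" by (simp add: power_mono)
  also have "\<dots> \<le> 2 * (norm a)\<^sup>2 + 4 * (norm b)\<^sup>2 + 4 * (norm c)\<^sup>2"
    using zero_le_power2[of "norm a - norm b - norm c"] zero_le_power2[of "norm b - norm c"]
    by (simp add: power2_eq_square algebra_simps)
  finally show ?thesis .
qed

lemma momentum_bregman_identity:
  assumes "0 < \<tau>" "\<tau> \<le> 1"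
    and "xg = \<tau> *\<^sub>R x + (1 - \<tau>) *\<^sub>R xf"
    and "xf' = xg + (2 * \<tau> / (2 - \<tau>)) *\<^sub>R (x' - x)"
  defines "C \<equiv> 2 * (1 - \<tau>) / \<tau>"
  shows "- 2 * ((g xg - g xs) \<bullet> (x' - xs)) =
     C * bregman F g xf xs - (C + 1) * bregman F g xf' xs - bregman F g xg xs
     - 2 * bregman F g xs xg - C * bregman F g xf xg + (C + 1) * bregman F g xf' xg"
proof -
  have "x = (1 / \<tau>) *\<^sub>R (\<tau> *\<^sub>R x)" using assms(1) by simp
  also have "\<tau> *\<^sub>R x = xg - (1 - \<tau>) *\<^sub>R xf" using assms(3) by simp
  finally have "x = (1 / \<tau>) *\<^sub>R xg - ((1 - \<tau>) / \<tau>) *\<^sub>R xf" by (simp add: scaleR_diff_right)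
  moreover have "x' = x + ((2 - \<tau>) / (2 * \<tau>)) *\<^sub>R (xf' - xg)"
    using assms(1,2,4) by simp
  \<comment> \<open>After eliminating \<open>x\<close> and \<open>x'\<close>, the identity is linear in \<open>g\<close>.\<close>
  ultimately have x'_xs: "x' - xs = (1 / \<tau>) *\<^sub>R xg - ((1 - \<tau>) / \<tau>) *\<^sub>R xf + ((2 - \<tau>) / (2 * \<tau>)) *\<^sub>R (xf' - xg) - xs"
    by simp
  show ?thesis unfolding x'_xs bregman_def C_def
    using assms(1,2) by (simp add: inner_diff_right inner_add_right inner_diff_left field_simps)
qed

lemma alg_dual_in_range:
  assumes "b \<in> range (\<lambda>x. K *v x)"
  shows "fst (snd (alg g K b \<eta> \<theta> \<alpha> \<tau> x0 k)) \<in> range (\<lambda>x. K *v x)"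
proof (induction k)
  case 0
  show ?case by (auto intro: range_eqI[of _ _ 0])
next
  case (Suc k)
  obtain x y xf where state: "alg g K b \<eta> \<theta> \<alpha> \<tau> x0 k = (x, y, xf)" by (metis prod.exhaust)
  obtain w where "y = K *v w" using Suc state by auto
  moreover obtain xb where "b = K *v xb" using assms by auto
  ultimately have "y + \<theta> *\<^sub>R (K *v v - b) = K *v (w + \<theta> *\<^sub>R (v - xb))" for v
    by (simp add: matrix_vector_right_distrib matrix_vector_mult_diff_distrib matrix_vector_mult_scaleR)
  then show ?case by (simp add: state Let_def)
qed

locale alg_step =
  fixes F :: "real^'d \<Rightarrow> real" and g :: "real^'d \<Rightarrow> real^'d"
    and K :: "real^'d^'p" and b :: "real^'p"
    and L \<mu> lam1 lam2 \<tau> \<eta> \<theta> :: real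
    and xs :: "real^'d" and ys :: "real^'p"
    and x xf :: "real^'d" and y :: "real^'p"
  assumes mu_pos: "0 < \<mu>" and mu_le_L: "\<mu> \<le> L"
    and smoothness: "L_smooth L F g" and strong_convexity: "strongly_convex \<mu> F"
    and K_nonzero: "K \<noteq> 0"
    and feasible: "K *v xs = b" and stationary: "g xs + transpose K *v ys = 0"
    and lam1_ge: "lambda_max (transpose K ** K) \<le> lam1"
    and lam2_pos: "0 < lam2" and lam2_le: "lam2 \<le> lambda_min_pos (transpose K ** K)"
    and tau_eq: "\<tau> = min 1 ((1/2) * sqrt ((\<mu> / L) * (lam1 / lam2)))"
    and eta_eq: "\<eta> = 1 / (4 * \<tau> * L)" and theta_eq: "\<theta> = 1 / (\<eta> * lam1)"
    and dual_in_range: "y - ys \<in> range (\<lambda>x. K *v x)"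
begin

(* One iteration from the state (x^k, y^k, x_f^k) = (x, y, xf), with alpha = mu: xg, xh, y', x', xf'
   are x_g^k, x^(k+1/2), y^(k+1), x^(k+1), x_f^(k+1), and dual_norm2 is the Y-block of the Q-norm. *)
definition "xg = \<tau> *\<^sub>R x + (1 - \<tau>) *\<^sub>R xf"
definition "xh = (1 / (1 + \<eta> * \<mu>)) *\<^sub>R (x - \<eta> *\<^sub>R (g xg - \<mu> *\<^sub>R xg + transpose K *v y))"
definition "y' = y + \<theta> *\<^sub>R (K *v xh - b)"
definition "x' = (1 / (1 + \<eta> * \<mu>)) *\<^sub>R (x - \<eta> *\<^sub>R (g xg - \<mu> *\<^sub>R xg + transpose K *v y'))"
definition "xf' = xg + (2 * \<tau> / (2 - \<tau>)) *\<^sub>R (x' - x)"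

definition "bregman_weight = 2 * (1 - \<tau>) / \<tau>"
definition "rate = (1/4) * min (sqrt ((\<mu> / L) * (lam2 / lam1))) (lam2 / lam1)"

definition lyapunov :: "real^'d \<Rightarrow> real^'p \<Rightarrow> real^'d \<Rightarrow> real" where
  "lyapunov u v w = Qnorm2 K \<eta> \<theta> \<mu> (u - xs) (v - ys) + bregman_weight * bregman F g w xs"

definition dual_norm2 :: "real^'p \<Rightarrow> real" where
  "dual_norm2 v = (1 / \<theta>) * (norm v)\<^sup>2 - \<eta> / (1 + \<eta> * \<mu>) * (norm (transpose K *v v))\<^sup>2"

lemma L_pos: "0 < L"
  using mu_pos mu_le_L by simp

lemma gradient: "has_gradient_everywhere F g"
  using smoothness unfolding L_smooth_def by simp

lemma lam1_pos: "0 < lam1" and lam2_le_lam1: "lam2 \<le> lam1"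
  using lambda_max_bound(1)[OF K_nonzero] lambda_min_pos_bound(1)[OF K_nonzero] lam1_ge lam2_le
  by linarith+

lemma tau_pos: "0 < \<tau>" and tau_le_1: "\<tau> \<le> 1"
  using tau_eq mu_pos L_pos lam1_pos lam2_pos by auto

lemma eta_pos: "0 < \<eta>"
  using eta_eq tau_pos L_pos by simp

lemma inverse_theta: "1 / \<theta> = \<eta> * lam1"
  using theta_eq by simp

lemma bregman_weight_nonneg: "0 \<le> bregman_weight"
  using tau_pos tau_le_1 unfolding bregman_weight_def by simp

lemma norm_transpose_le: "(norm (transpose K *v v))\<^sup>2 \<le> lam1 * (norm v)\<^sup>2"
  using lambda_max_bound(2)[OF K_nonzero, of v] lam1_ge
  by (meson mult_right_mono order_trans zero_le_power2)

lemma norm_range_ge: "lam2 * (norm (K *v w))\<^sup>2 \<le> (norm (transpose K *v (K *v w)))\<^sup>2"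
  using lambda_min_pos_bound(2)[OF K_nonzero, of w] lam2_le
  by (meson mult_right_mono order_trans zero_le_power2)

lemma rate_nonneg: "0 \<le> rate"
  unfolding rate_def using mu_pos L_pos lam1_pos lam2_pos by simp

lemma rate_bounds:
  shows "rate \<le> lam2 / (4 * lam1)"
    and "rate * \<eta> * lam1 / lam2 \<le> 1 / (8 * L)"
    and "rate \<le> \<eta> * \<mu>"
    and "rate * bregman_weight \<le> 1"
proof -
  define r q where "r = \<mu> / L" and "q = lam2 / lam1"
  have "0 < r" "0 < q" "q \<le> 1"
    unfolding r_def q_def using mu_pos L_pos lam1_pos lam2_pos lam2_le_lam1 by auto
  have \<tau>: "\<tau> = min 1 (sqrt (r / q) / 2)" and \<rho>: "rate = min (sqrt (r * q)) q / 4"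
    unfolding tau_eq rate_def r_def q_def by (simp_all add: mult.commute)
  have half: "rate \<le> \<tau> * q / 2" and prod: "rate * \<tau> \<le> r / 8"
    unfolding \<tau> \<rho> using min_sqrt_ratio_bounds[OF \<open>0 < r\<close> \<open>0 < q\<close>] by simp_all
  show "rate \<le> lam2 / (4 * lam1)"
    unfolding \<rho> q_def by simp
  have "rate * \<eta> * lam1 / lam2 = rate / (4 * \<tau> * L * q)"
    unfolding eta_eq q_def using lam1_pos lam2_pos by (simp add: field_simps)
  also have "\<dots> \<le> (\<tau> * q / 2) / (4 * \<tau> * L * q)"
    using half tau_pos L_pos \<open>0 < q\<close> by (intro divide_right_mono) auto
  also have "\<dots> = 1 / (8 * L)"
    using tau_pos L_pos \<open>0 < q\<close> by (simp add: field_simps)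
  finally show "rate * \<eta> * lam1 / lam2 \<le> 1 / (8 * L)" .
  have "\<eta> * \<mu> * \<tau> = r / 4"
    unfolding eta_eq r_def using tau_pos L_pos by (simp add: field_simps)
  then have "rate * \<tau> \<le> \<eta> * \<mu> * \<tau>" using prod \<open>0 < r\<close> by linarith
  then show "rate \<le> \<eta> * \<mu>" using tau_pos by simp
  have "rate * bregman_weight \<le> (\<tau> / 2) * bregman_weight"
    using half \<open>q \<le> 1\<close> tau_pos bregman_weight_nonneg
    by (intro mult_right_mono) (auto intro: order_trans mult_left_le)
  also have "\<dots> = 1 - \<tau>" unfolding bregman_weight_def using tau_pos by simp
  finally show "rate * bregman_weight \<le> 1" using tau_pos by linarith
qed

lemma dual_norm2_nonneg: "0 \<le> dual_norm2 v"
proof -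
  have "\<eta> / (1 + \<eta> * \<mu>) * (norm (transpose K *v v))\<^sup>2 \<le> \<eta> * (lam1 * (norm v)\<^sup>2)"
    using eta_pos mu_pos norm_transpose_le by (intro mult_mono) (auto simp: divide_le_eq)
  then show ?thesis unfolding dual_norm2_def inverse_theta by simp
qed

lemma dual_norm2_le: "dual_norm2 v \<le> \<eta> * lam1 * (norm v)\<^sup>2"
  unfolding dual_norm2_def inverse_theta using eta_pos mu_pos by simp

lemma lyapunov_eq: "lyapunov u v w = (1 / \<eta>) * (norm (u - xs))\<^sup>2 + dual_norm2 (v - ys) + bregman_weight * bregman F g w xs"
  unfolding lyapunov_def dual_norm2_def Qnorm2_eq by simp

lemma primal_update: "x' - x = - \<eta> *\<^sub>R ((g xg - g xs) + \<mu> *\<^sub>R (x' - xg) + transpose K *v (y' - ys))"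
proof -
  have "0 < 1 + \<eta> * \<mu>" using eta_pos mu_pos by (simp add: add_pos_pos)
  then have "(1 + \<eta> * \<mu>) *\<^sub>R x' = x - \<eta> *\<^sub>R (g xg - \<mu> *\<^sub>R xg + transpose K *v y')"
    unfolding x'_def by simp
  moreover have "g xs = - (transpose K *v ys)" using stationary by (simp add: eq_neg_iff_add_eq_0)
  ultimately show ?thesis by (simp add: algebra_simps)
qed

lemma dual_update:
  "(1 / \<theta>) *\<^sub>R (y' - y) - (\<eta> / (1 + \<eta> * \<mu>)) *\<^sub>R (K *v (transpose K *v (y' - y))) = K *v (x' - xs)"
proof -
  have "x' = xh - (\<eta> / (1 + \<eta> * \<mu>)) *\<^sub>R (transpose K *v (y' - y))"
    unfolding x'_def xh_def by (simp add: algebra_simps)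
  moreover have "(1 / \<theta>) *\<^sub>R (y' - y) = K *v xh - K *v xs"
    unfolding y'_def feasible using eta_pos lam1_pos theta_eq by simp
  ultimately show ?thesis by (simp add: matrix_vector_mult_diff_distrib matrix_vector_mult_scaleR)
qed

lemma next_dual_in_range: "y' - ys \<in> range (\<lambda>x. K *v x)"
proof -
  obtain w where "y - ys = K *v w" using dual_in_range by blast
  moreover have "y' - ys = (y - ys) + \<theta> *\<^sub>R (K *v (xh - xs))"
    unfolding y'_def by (simp add: feasible algebra_simps)
  ultimately have "y' - ys = K *v (w + \<theta> *\<^sub>R (xh - xs))"
    by (simp add: matrix_vector_right_distrib matrix_vector_mult_scaleR)
  then show ?thesis by blast
qed

lemma dual_norm2_diff:
  "dual_norm2 (y' - ys) - dual_norm2 (y - ys) = 2 * ((x' - xs) \<bullet> (transpose K *v (y' - ys))) - dual_norm2 (y' - y)"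
proof -
  define v' dy c where "v' = y' - ys" and "dy = y' - y" and "c = \<eta> / (1 + \<eta> * \<mu>)"
  have "(1 / \<theta>) * (dy \<bullet> v') - c * ((transpose K *v dy) \<bullet> (transpose K *v v'))
      = ((1 / \<theta>) *\<^sub>R dy - c *\<^sub>R (K *v (transpose K *v dy))) \<bullet> v'"
    using inner_matrix_vector_mult_transpose[of K "transpose K *v dy" v']
    by (simp add: inner_diff_left inner_diff_right inner_commute)
  also have "\<dots> = (x' - xs) \<bullet> (transpose K *v v')"
    unfolding dy_def c_def dual_update by (rule inner_matrix_vector_mult_transpose)
  finally have cross: "(1 / \<theta>) * (dy \<bullet> v') - c * ((transpose K *v dy) \<bullet> (transpose K *v v'))
      = (x' - xs) \<bullet> (transpose K *v v')" .
  have split: "y - ys = v' - dy" unfolding v'_def dy_def by simp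
  have "dual_norm2 (y - ys)
      = dual_norm2 v' - 2 * ((1 / \<theta>) * (dy \<bullet> v') - c * ((transpose K *v dy) \<bullet> (transpose K *v v'))) + dual_norm2 dy"
    unfolding split dual_norm2_def c_def power2_norm_eq_inner
    by (simp add: inner_commute algebra_simps)
  with cross show ?thesis unfolding v'_def dy_def by argo
qed

lemma lyapunov_identity:
  "lyapunov x' y' xf' = lyapunov x y xf - (1 / \<eta>) * (norm (x' - x))\<^sup>2 - dual_norm2 (y' - y)
     - bregman F g xf' xs - bregman F g xg xs - 2 * bregman F g xs xg - bregman_weight * bregman F g xf xg
     + (bregman_weight + 1) * bregman F g xf' xg - 2 * \<mu> * ((x' - xg) \<bullet> (x' - xs))"
proof -
  have split: "x - xs = (x' - xs) - (x' - x)" by simp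
  have primal: "(1 / \<eta>) * (norm (x' - xs))\<^sup>2 - (1 / \<eta>) * (norm (x - xs))\<^sup>2
      = (2 / \<eta>) * ((x' - x) \<bullet> (x' - xs)) - (1 / \<eta>) * (norm (x' - x))\<^sup>2"
    unfolding split power2_norm_eq_inner by (simp add: inner_commute algebra_simps)
  have "(2 / \<eta>) * ((x' - x) \<bullet> (x' - xs)) = - 2 * ((g xg - g xs) \<bullet> (x' - xs))
      - 2 * \<mu> * ((x' - xg) \<bullet> (x' - xs)) - 2 * ((transpose K *v (y' - ys)) \<bullet> (x' - xs))"
    unfolding primal_update using eta_pos by (simp add: algebra_simps)
  moreover have "- 2 * ((g xg - g xs) \<bullet> (x' - xs)) = bregman_weight * bregman F g xf xs - (bregman_weight + 1) * bregman F g xf' xs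
      - bregman F g xg xs - 2 * bregman F g xs xg - bregman_weight * bregman F g xf xg + (bregman_weight + 1) * bregman F g xf' xg"
    unfolding bregman_weight_def by (rule momentum_bregman_identity[OF tau_pos tau_le_1 xg_def xf'_def])
  ultimately show ?thesis
    using primal dual_norm2_diff unfolding lyapunov_eq by (simp add: inner_commute algebra_simps)
qed

definition "dissipation = (1 / (2 * \<eta>)) * (norm (x' - x))\<^sup>2 + bregman F g xf' xs
  + (norm (g xg - g xs))\<^sup>2 / (2 * L) + \<mu> * (norm (x' - xg))\<^sup>2 + \<mu> * (norm (x' - xs))\<^sup>2"

lemma momentum_bregman_le: "(bregman_weight + 1) * bregman F g xf' xg \<le> (1 / (2 * \<eta>)) * (norm (x' - x))\<^sup>2"
proof -
  have "(bregman_weight + 1) * bregman F g xf' xg \<le> (bregman_weight + 1) * (L / 2 * (norm (xf' - xg))\<^sup>2)"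
    using bregman_weight_nonneg L_smooth_bregman_le[OF smoothness] by (simp add: mult_left_mono)
  also have "norm (xf' - xg) = (2 * \<tau> / (2 - \<tau>)) * norm (x' - x)"
    unfolding xf'_def using tau_pos tau_le_1 by simp
  also have "(bregman_weight + 1) * (L / 2 * ((2 * \<tau> / (2 - \<tau>)) * norm (x' - x))\<^sup>2)
      = (2 * L * \<tau> / (2 - \<tau>)) * (norm (x' - x))\<^sup>2"
  proof -
    have "bregman_weight + 1 = (2 - \<tau>) / \<tau>" unfolding bregman_weight_def using tau_pos by (simp add: field_simps)
    then show ?thesis using tau_pos tau_le_1 by (simp add: power2_eq_square)
  qed
  also have "\<dots> \<le> (2 * L * \<tau> / 1) * (norm (x' - x))\<^sup>2"
    using tau_pos tau_le_1 L_pos by (intro mult_right_mono divide_left_mono) auto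
  also have "\<dots> = (1 / (2 * \<eta>)) * (norm (x' - x))\<^sup>2"
    unfolding eta_eq by simp
  finally show ?thesis .
qed

lemma lyapunov_decrease: "lyapunov x' y' xf' + dissipation \<le> lyapunov x y xf"
proof -
  have split: "xg - xs = (x' - xs) - (x' - xg)" by simp
  have "2 * \<mu> * ((x' - xg) \<bullet> (x' - xs))
      = \<mu> * (norm (x' - xg))\<^sup>2 + \<mu> * (norm (x' - xs))\<^sup>2 - \<mu> * (norm (xg - xs))\<^sup>2"
    unfolding split power2_norm_eq_inner by (simp add: inner_commute algebra_simps)
  moreover have "\<mu> * (norm (xg - xs))\<^sup>2 \<le> bregman F g xg xs + bregman F g xs xg"
    using strongly_convex_bregman_ge[OF gradient strong_convexity, of xg xs]
      strongly_convex_bregman_ge[OF gradient strong_convexity, of xs xg]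
    by (simp add: norm_minus_commute)
  moreover have "(norm (g xg - g xs))\<^sup>2 / (2 * L) \<le> bregman F g xs xg"
    using bregman_ge_norm_gradient_diff[OF smoothness strong_convexity _ L_pos, of xs xg] mu_pos
    by (simp add: norm_minus_commute)
  moreover have "0 \<le> bregman_weight * bregman F g xf xg"
    using bregman_weight_nonneg bregman_nonneg[OF gradient strong_convexity] mu_pos by simp
  ultimately show ?thesis
    using lyapunov_identity momentum_bregman_le dual_norm2_nonneg[of "y' - y"]
    unfolding dissipation_def by (simp add: field_simps)
qed

lemma rate_dual_norm2_le_transpose:
  "rate * dual_norm2 (y' - ys) \<le> (rate * \<eta> * lam1 / lam2) * (norm (transpose K *v (y' - ys)))\<^sup>2"
proof -
  obtain w where w: "y' - ys = K *v w" using next_dual_in_range by blast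
  have "rate * dual_norm2 (y' - ys) \<le> rate * (\<eta> * lam1 * (norm (y' - ys))\<^sup>2)"
    using dual_norm2_le rate_nonneg by (rule mult_left_mono)
  also have "\<dots> = (rate * \<eta> * lam1 / lam2) * (lam2 * (norm (y' - ys))\<^sup>2)"
    using lam2_pos by simp
  also have "\<dots> \<le> (rate * \<eta> * lam1 / lam2) * (norm (transpose K *v (y' - ys)))\<^sup>2"
    using norm_range_ge[of w] rate_nonneg eta_pos lam1_pos lam2_pos unfolding w by (intro mult_left_mono) auto
  finally show ?thesis .
qed

lemma norm_transpose_next_dual_le:
  "(norm (transpose K *v (y' - ys)))\<^sup>2
     \<le> 2 * (norm (x' - x))\<^sup>2 / \<eta>\<^sup>2 + 4 * (norm (g xg - g xs))\<^sup>2 + 4 * \<mu>\<^sup>2 * (norm (x' - xg))\<^sup>2"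
proof -
  have "transpose K *v (y' - ys) = (- (1 / \<eta>) *\<^sub>R (x' - x)) + (- (g xg - g xs)) + (- \<mu> *\<^sub>R (x' - xg))"
    unfolding primal_update using eta_pos by (simp add: algebra_simps)
  then show ?thesis
    using norm_add3_power2_le[of "- (1 / \<eta>) *\<^sub>R (x' - x)" "- (g xg - g xs)" "- \<mu> *\<^sub>R (x' - xg)"] eta_pos mu_pos
    by (simp add: power_mult_distrib power_divide norm_minus_commute mult.assoc)
qed

lemma dual_weight_bound:
  assumes "\<beta> \<le> \<eta> / 4" "\<beta> \<le> 1 / (8 * L)" and "0 \<le> a" "0 \<le> c" "0 \<le> e"
  shows "\<beta> * (2 * a / \<eta>\<^sup>2 + 4 * c + 4 * \<mu>\<^sup>2 * e) \<le> (1 / (2 * \<eta>)) * a + c / (2 * L) + \<mu> * e"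
proof -
  have "\<beta> * (2 * a / \<eta>\<^sup>2) \<le> (\<eta> / 4) * (2 * a / \<eta>\<^sup>2)"
    using assms(1,3) by (intro mult_right_mono) auto
  also have "\<dots> = (1 / (2 * \<eta>)) * a"
    using eta_pos by (simp add: power2_eq_square)
  finally have 1: "\<beta> * (2 * a / \<eta>\<^sup>2) \<le> (1 / (2 * \<eta>)) * a" .
  have 2: "\<beta> * (4 * c) \<le> c / (2 * L)"
    using mult_right_mono[OF assms(2), of "4 * c"] assms(4) by simp
  have "\<beta> * (4 * \<mu>\<^sup>2 * e) \<le> (\<mu> / (2 * L)) * (\<mu> * e)"
    using mult_right_mono[OF assms(2), of "4 * \<mu>\<^sup>2 * e"] assms(5) by (simp add: power2_eq_square)
  also have "\<dots> \<le> 1 * (\<mu> * e)"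
    using mu_pos mu_le_L L_pos assms(5) by (intro mult_right_mono) auto
  finally have 3: "\<beta> * (4 * \<mu>\<^sup>2 * e) \<le> \<mu> * e" by simp
  from 1 2 3 show ?thesis by (simp add: distrib_left)
qed

lemma rate_dual_norm2_le:
  "rate * dual_norm2 (y' - ys)
     \<le> (1 / (2 * \<eta>)) * (norm (x' - x))\<^sup>2 + (norm (g xg - g xs))\<^sup>2 / (2 * L) + \<mu> * (norm (x' - xg))\<^sup>2"
proof -
  define \<beta> where "\<beta> = rate * \<eta> * lam1 / lam2"
  have "0 \<le> \<beta>" unfolding \<beta>_def using rate_nonneg eta_pos lam1_pos lam2_pos by simp
  have "\<beta> \<le> (lam2 / (4 * lam1)) * \<eta> * lam1 / lam2"
    unfolding \<beta>_def using rate_bounds(1) eta_pos lam1_pos lam2_pos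
    by (intro divide_right_mono mult_right_mono) auto
  then have "\<beta> \<le> \<eta> / 4" using lam1_pos lam2_pos by simp
  have "\<beta> \<le> 1 / (8 * L)" unfolding \<beta>_def by (rule rate_bounds(2))
  have "rate * dual_norm2 (y' - ys) \<le> \<beta> * (norm (transpose K *v (y' - ys)))\<^sup>2"
    unfolding \<beta>_def by (rule rate_dual_norm2_le_transpose)
  also have "\<dots> \<le> \<beta> * (2 * (norm (x' - x))\<^sup>2 / \<eta>\<^sup>2 + 4 * (norm (g xg - g xs))\<^sup>2
      + 4 * \<mu>\<^sup>2 * (norm (x' - xg))\<^sup>2)"
    using norm_transpose_next_dual_le \<open>0 \<le> \<beta>\<close> by (rule mult_left_mono)
  also have "\<dots> \<le> (1 / (2 * \<eta>)) * (norm (x' - x))\<^sup>2 + (norm (g xg - g xs))\<^sup>2 / (2 * L)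
      + \<mu> * (norm (x' - xg))\<^sup>2"
    using \<open>\<beta> \<le> \<eta> / 4\<close> \<open>\<beta> \<le> 1 / (8 * L)\<close> by (rule dual_weight_bound) simp_all
  finally show ?thesis .
qed

lemma rate_lyapunov_le_dissipation: "rate * lyapunov x' y' xf' \<le> dissipation"
proof -
  have "rate / \<eta> \<le> \<mu>" using rate_bounds(3) eta_pos by (simp add: divide_le_eq mult.commute)
  then have "rate * ((1 / \<eta>) * (norm (x' - xs))\<^sup>2) \<le> \<mu> * (norm (x' - xs))\<^sup>2"
    using mult_right_mono[of "rate / \<eta>" \<mu> "(norm (x' - xs))\<^sup>2"] by simp
  moreover have "rate * (bregman_weight * bregman F g xf' xs) \<le> bregman F g xf' xs"
    using rate_bounds(4) rate_nonneg bregman_weight_nonneg bregman_nonneg[OF gradient strong_convexity, of xf' xs] mu_pos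
    by (metis mult.assoc mult_left_le_one_le mult_nonneg_nonneg less_imp_le)
  ultimately show ?thesis
    using rate_dual_norm2_le unfolding lyapunov_eq dissipation_def by (simp add: distrib_left)
qed

lemma lyapunov_contraction: "lyapunov x' y' xf' \<le> inverse (1 + rate) * lyapunov x y xf"
proof -
  have "(1 + rate) * lyapunov x' y' xf' \<le> lyapunov x y xf"
    using lyapunov_decrease rate_lyapunov_le_dissipation by (simp add: distrib_right)
  then show ?thesis
    using rate_nonneg by (simp add: field_simps)
qed

end

theorem lemma5:
  fixes F :: "real^'d \<Rightarrow> real" and g :: "real^'d \<Rightarrow> real^'d"
    and K :: "real^'d^'p" and b :: "real^'p"
    and L \<mu> lam1 lam2 :: real and x0 xs :: "real^'d" and ys :: "real^'p"
    and \<eta> \<theta> \<alpha> \<tau> :: real and k :: nat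
  assumes "0 < \<mu>" "\<mu> \<le> L"
    and "L_smooth L F g" and "strongly_convex \<mu> F"
    and "K \<noteq> 0" and "b \<in> range (\<lambda>x. K *v x)"
    and "K *v xs = b" and "\<forall>x. K *v x = b \<longrightarrow> F xs \<le> F x"
    and "ys \<in> range (\<lambda>x. K *v x)" and "g xs + transpose K *v ys = 0"
    and "lam1 \<ge> lambda_max (transpose K ** K)"
    and "0 < lam2" and "lam2 \<le> lambda_min_pos (transpose K ** K)"
    and "\<tau> = min 1 ((1/2) * sqrt ((\<mu> / L) * (lam1 / lam2)))"
    and "\<eta> = 1 / (4 * \<tau> * L)" and "\<theta> = 1 / (\<eta> * lam1)" and "\<alpha> = \<mu>"
  shows
    "(let \<Psi> = (\<lambda>j. case alg g K b \<eta> \<theta> \<alpha> \<tau> x0 j of (x, y, xf) \<Rightarrow>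
                  Qnorm2 K \<eta> \<theta> \<alpha> (x - xs) (y - ys) + (2 * (1 - \<tau>) / \<tau>) * bregman F g xf xs)
     in \<Psi> (Suc k) \<le> inverse (1 + (1/4) * min (sqrt ((\<mu> / L) * (lam2 / lam1))) (lam2 / lam1)) * \<Psi> k)"
proof -
  obtain x y xf where state: "alg g K b \<eta> \<theta> \<mu> \<tau> x0 k = (x, y, xf)"
    by (metis prod.exhaust)
  obtain w ws where "y = K *v w" "ys = K *v ws"
    using alg_dual_in_range[OF assms(6), of g \<eta> \<theta> \<mu> \<tau> x0 k] assms(9) state by auto
  then have "y - ys \<in> range (\<lambda>x. K *v x)"
    by (metis matrix_vector_mult_diff_distrib rangeI)
  then interpret step: alg_step F g K b L \<mu> lam1 lam2 \<tau> \<eta> \<theta> xs ys x xf y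
    using assms by unfold_locales auto
  have next_state: "alg g K b \<eta> \<theta> \<mu> \<tau> x0 (Suc k) = (step.x', step.y', step.xf')"
    using state by (simp add: Let_def step.xg_def step.xh_def step.y'_def step.x'_def step.xf'_def)
  show ?thesis
    using step.lyapunov_contraction
    unfolding assms(17) Let_def next_state state step.lyapunov_def step.bregman_weight_def step.rate_def by simp
qed

end
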